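(* Let $r\in\mathbb N_0$ and let $x_0,\dots,x_r\in\mathbb R$ satisfy: (i) $\sum_{i=0}^rx_i=0$; (ii) $x_{r-i}=x_i$ for all $0\le i\le r$; (iii) there is an integer $n$ such that $x_i\ge0$ for $0\le i\le n$ and $x_i<0$ for $n<i\le\lfloor r/2\rfloor$. Let $f_0,\dots,f_r\in\mathbb R$ satisfy $0\le f_1-f_0\le f_2-f_1\le\dots\le f_r-f_{r-1}$. Then $\sum_{i=0}^rf_ix_i\ge0$. *)

theory Defs
  imports Main Complex_Main
begin

end

theory Submission
  imports Defs
begin

text \<open>Fold the weights: by the symmetry of \<open>x\<close>, the sum equals half of
  \<open>\<Sum>i. g i * x i\<close> with \<open>g i = f i + f (r - i)\<close>, and convexity of \<open>f\<close> makes
  \<open>g\<close> decreasing on the first half \<open>{0..r div 2}\<close>. As \<open>\<Sum>i. x i = 0\<close>, the value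
  of \<open>g\<close> at the sign change \<open>m\<close> of \<open>x\<close> can be subtracted from every weight, and then
  every term \<open>(g i - g m) * x i\<close> is nonnegative: after folding \<open>i\<close> to
  \<open>min i (r - i)\<close>, the factors \<open>x i\<close> and \<open>g i - g m\<close> are both \<open>\<ge> 0\<close> up to \<open>m\<close>
  and both \<open>\<le> 0\<close> beyond it.\<close>

lemma mono_on_atLeastAtMost_SucI:
  fixes h :: "nat \<Rightarrow> 'a::preorder"
  assumes Suc_le: "\<And>j. a \<le> j \<Longrightarrow> j < b \<Longrightarrow> h j \<le> h (Suc j)"
  shows "mono_on {a..b} h"
proof (rule monotone_onI)
  fix u v assume "u \<in> {a..b}" "v \<in> {a..b}" "u \<le> v"
  then have "a \<le> u" "v \<le> b" by auto
  from \<open>u \<le> v\<close> \<open>v \<le> b\<close> show "h u \<le> h v"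
  proof (induction v rule: dec_induct)
    case base
    then show ?case by simp
  next
    case (step k)
    have "h u \<le> h k" using step.IH step.prems by simp
    also have "h k \<le> h (Suc k)"
      using Suc_le \<open>a \<le> u\<close> step.hyps step.prems by simp
    finally show ?case .
  qed
qed

lemma antimono_on_atLeastAtMost_SucI:
  fixes h :: "nat \<Rightarrow> 'a::ordered_ab_group_add"
  assumes "\<And>j. a \<le> j \<Longrightarrow> j < b \<Longrightarrow> h (Suc j) \<le> h j"
  shows "antimono_on {a..b} h"
proof (rule monotone_onI)
  have "mono_on {a..b} (\<lambda>i. - h i)"
    by (rule mono_on_atLeastAtMost_SucI) (simp add: assms)
  moreover fix u v assume "u \<in> {a..b}" "v \<in> {a..b}" "u \<le> v"
  ultimately have "- h u \<le> - h v" by (rule monotone_onD)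
  then show "h v \<le> h u" by simp
qed

lemma mono_on_backward_diff:
  fixes f :: "nat \<Rightarrow> real"
  assumes "\<And>i. 1 \<le> i \<Longrightarrow> i < r \<Longrightarrow> f i - f (i - 1) \<le> f (i + 1) - f i"
  shows "mono_on {1..r} (\<lambda>j. f j - f (j - 1))"
  by (rule mono_on_atLeastAtMost_SucI) (use assms in auto)

lemma antimono_on_reflection_sum:
  fixes f :: "nat \<Rightarrow> real"
  assumes "mono_on {1..r} (\<lambda>j. f j - f (j - 1))"
  shows "antimono_on {0..r div 2} (\<lambda>i. f i + f (r - i))"
proof (rule antimono_on_atLeastAtMost_SucI)
  fix i assume "0 \<le> i" "i < r div 2"
  then have "f (Suc i) - f (Suc i - 1) \<le> f (r - i) - f (r - i - 1)"
    using monotone_onD[OF assms, of "Suc i" "r - i"] by auto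
  moreover have "r - i - 1 = r - Suc i" by simp
  ultimately show "f (Suc i) + f (r - Suc i) \<le> f i + f (r - i)" by simp
qed

lemma sum_mult_reflect:
  fixes f x :: "nat \<Rightarrow> real"
  assumes "\<And>i. i \<le> r \<Longrightarrow> x (r - i) = x i"
  shows "(\<Sum>i=0..r. f (r - i) * x i) = (\<Sum>i=0..r. f i * x i)"
proof -
  have "(\<Sum>i=0..r. f i * x i) = (\<Sum>i=0..r. f (r - i) * x (r - i))"
    using sum.atLeastAtMost_rev[of "\<lambda>i. f i * x i" 0 r] by simp
  also have "\<dots> = (\<Sum>i=0..r. f (r - i) * x i)"
    by (rule sum.cong) (auto simp: assms)
  finally show ?thesis by simp
qed

lemma sum_mult_nonneg_if_sum_eq_zero:
  fixes g x :: "'a \<Rightarrow> real"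
  assumes "(\<Sum>i\<in>A. x i) = 0" "\<And>i. i \<in> A \<Longrightarrow> (g i - c) * x i \<ge> 0"
  shows "(\<Sum>i\<in>A. g i * x i) \<ge> 0"
proof -
  have "(\<Sum>i\<in>A. g i * x i) = (\<Sum>i\<in>A. (g i - c) * x i)"
    using assms(1) by (simp add: algebra_simps sum_subtractf sum_distrib_left[symmetric])
  also have "\<dots> \<ge> 0" by (rule sum_nonneg) (use assms(2) in auto)
  finally show ?thesis .
qed

lemma antimono_mult_sign_change_nonneg:
  fixes g x :: "nat \<Rightarrow> real" and n :: int
  assumes g: "antimono_on {0..h} g"
    and nonneg: "\<And>i. i \<le> h \<Longrightarrow> int i \<le> n \<Longrightarrow> x i \<ge> 0"
    and nonpos: "\<And>i. i \<le> h \<Longrightarrow> n < int i \<Longrightarrow> x i \<le> 0"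
    and "k \<le> h"
  shows "(g k - g (nat (min n (int h)))) * x k \<ge> 0"
proof -
  define m where "m = nat (min n (int h))"
  have "m \<le> h" unfolding m_def by auto
  show ?thesis
  proof (cases "int k \<le> n")
    case True
    then have "k \<le> m" using \<open>k \<le> h\<close> unfolding m_def by auto
    then have "g m \<le> g k" using monotone_onD[OF g] \<open>m \<le> h\<close> by auto
    with nonneg[OF \<open>k \<le> h\<close> True] show ?thesis by (simp add: m_def)
  next
    case False
    then have "m \<le> k" using \<open>k \<le> h\<close> unfolding m_def by auto
    then have "g k \<le> g m" using monotone_onD[OF g] \<open>k \<le> h\<close> by auto
    with nonpos[OF \<open>k \<le> h\<close>] False show ?thesis
      by (simp add: m_def mult_nonpos_nonpos)
  qed
qed

theorem lemma10:
  fixes r :: nat and x f :: "nat \<Rightarrow> real" and n :: int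
  assumes sum0: "(\<Sum>i=0..r. x i) = 0"
    and symm: "\<And>i. i \<le> r \<Longrightarrow> x (r - i) = x i"
    and nonneg: "\<And>i. i \<le> r \<Longrightarrow> int i \<le> n \<Longrightarrow> x i \<ge> 0"
    and neg: "\<And>i. n < int i \<Longrightarrow> i \<le> r div 2 \<Longrightarrow> x i < 0"
    and f0: "1 \<le> r \<Longrightarrow> 0 \<le> f 1 - f 0"
    and fconv: "\<And>i. 1 \<le> i \<Longrightarrow> i < r \<Longrightarrow> f i - f (i - 1) \<le> f (i + 1) - f i"
  shows "(\<Sum>i=0..r. f i * x i) \<ge> 0"
proof -
  define g where "g i = f i + f (r - i)" for i
  define m where "m = nat (min n (int (r div 2)))"
  have g_antimono: "antimono_on {0..r div 2} g"
    unfolding g_def by (intro antimono_on_reflection_sum mono_on_backward_diff fconv)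
  have "(\<Sum>i=0..r. g i * x i) = 2 * (\<Sum>i=0..r. f i * x i)"
    using sum_mult_reflect[of r x f] symm
    by (simp add: g_def algebra_simps sum.distrib)
  moreover have "(\<Sum>i=0..r. g i * x i) \<ge> 0"
  proof (rule sum_mult_nonneg_if_sum_eq_zero[OF sum0])
    fix i assume "i \<in> {0..r}"
    then have "i \<le> r" by simp
    define k where "k = min i (r - i)"
    have "k \<le> r div 2" "g k = g i" "x k = x i"
      using \<open>i \<le> r\<close> symm[of i] by (auto simp: k_def g_def min_def)
    moreover have "(g k - g m) * x k \<ge> 0"
      unfolding m_def
    proof (rule antimono_mult_sign_change_nonneg[OF g_antimono _ _ \<open>k \<le> r div 2\<close>])
      show "x j \<ge> 0" if "j \<le> r div 2" "int j \<le> n" for j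
        using nonneg[of j] that div_le_dividend[of r 2] by linarith
      show "x j \<le> 0" if "j \<le> r div 2" "n < int j" for j
        using neg[OF that(2,1)] by simp
    qed
    ultimately show "(g i - g m) * x i \<ge> 0" by simp
  qed
  ultimately show ?thesis by simp
qed

end
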